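(* Let $j,i,j',i',j'',i''$ be nonnegative integers satisfying $i'-j=i''-j'=i-j''$. Then $u^{j,i,j',i',j'',i''}$ is invariant under the natural action of the dihedral group $D_6$ (the symmetry group of a hexagon) on its six arguments, viewed as placed cyclically in the order $(j,i,j',i',j'',i'')$ around a hexagon; i.e. $u^{j,i,j',i',j'',i''}=u^{j',i',j'',i'',j,i}$ (cyclic rotation by two places), $u^{j,i,j',i',j'',i''}=u^{i,j',i',j'',i'',j}$ (rotation by one place), and $u^{j,i,j',i',j'',i''}=u^{j'',i',j',i,j,i''}$ (a reflection), hence under all compositions of these.
   Context: $t$ is a formal variable, $\alpha_m=\prod_{r=1}^m(1-t^r)$ and $(x;t)_n=\prod_{s=0}^{n-1}(1-xt^s)$. For nonnegative integers $j,i,j',i',j'',i''$, \[u^{j,i,j',i',j'',i''}=\frac{\alpha_{i+j}}{\alpha_i\alpha_{i'}\alpha_{i''}\alpha_j\alpha_{j''}}\sum_{m=0}^{\min(i,i')}\frac{(t^{-i};t)_m\,(t^{-i'};t)_m}{(t;t)_m\,(t^{-(i+j)};t)_m}\,t^{m(i''+1)}\] (a terminating basic hypergeometric series ${}_2\phi_1$). Note the balance condition $i'-j=i''-j'=i-j''$ is itself preserved by the $D_6$ action. *)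

theory Defs
  imports "HOL-Computational_Algebra.Polynomial" "HOL-Computational_Algebra.Fraction_Field"
begin

definition tt :: "rat poly fract" where
  "tt = Fract [:0, 1:] 1"

definition alpha :: "nat \<Rightarrow> rat poly fract" where
  "alpha m = (\<Prod>r\<in>{1..m}. 1 - tt ^ r)"

definition qpoch :: "rat poly fract \<Rightarrow> nat \<Rightarrow> rat poly fract" where
  "qpoch x n = (\<Prod>s\<in>{0..<n}. 1 - x * tt ^ s)"

definition u :: "nat \<Rightarrow> nat \<Rightarrow> nat \<Rightarrow> nat \<Rightarrow> nat \<Rightarrow> nat \<Rightarrow> rat poly fract" where
  "u j i j' i' j'' i'' =
     alpha (i + j) / (alpha i * alpha i' * alpha i'' * alpha j * alpha j'') *
     (\<Sum>m = 0..min i i'.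
        qpoch (inverse (tt ^ i)) m * qpoch (inverse (tt ^ i')) m /
        (qpoch tt m * qpoch (inverse (tt ^ (i + j))) m) * tt ^ (m * (i'' + 1)))"

end

theory Submission
  imports Defs
begin

text \<open>
  Since (t^-N; t)_m = (-1)^m t^(m(m-1)/2) alpha_N / (t^(mN) alpha_(N-m)), the balance
  condition turns u into u_numer / (alpha_i'' alpha_j alpha_j'') with
  u_numer = sum_m (-1)^m t^(m(m+1)/2 + m j') alpha_(i+j-m) / (alpha_(i-m) alpha_(i'-m) alpha_m).
  Its summands are symmetric in i, i' and see j only through i + j = i' + j'': this is
  the reflection. For the rotation, write alpha_(i+j-m) / alpha_(i-m) = (t^(i-m+1); t)_j
  and expand it by the q-binomial theorem: alpha_i' u_numer becomes a double sum over Gaussian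
  binomials [i' choose m] [j choose l] that is symmetric under (i', j') <-> (j, i).
  For the reflected and for the rotated hexagon this gives the same double sum.
\<close>

lemma tt_power_eq_Fract: "tt ^ r = Fract ([:0, 1:] ^ r) 1"
  by (induction r) (simp_all add: tt_def One_fract_def)

lemma tt_nonzero: "tt \<noteq> 0"
  by (simp add: tt_def Zero_fract_def eq_fract)

lemma tt_power_eq_1_iff: "tt ^ r = 1 \<longleftrightarrow> r = 0"
proof
  assume "tt ^ r = 1"
  then have "[:0, 1:] ^ r = (1 :: rat poly)"
    by (simp add: tt_power_eq_Fract One_fract_def eq_fract)
  then have "degree ([:0, 1 :: rat:] ^ r) = 0" by simp
  then show "r = 0" by (simp add: degree_power_eq)
qed simp

lemma alpha_nonzero: "alpha m \<noteq> 0"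
  unfolding alpha_def by (auto simp: tt_power_eq_1_iff)

lemma alpha_0 [simp]: "alpha 0 = 1"
  by (simp add: alpha_def)

lemma alpha_Suc: "alpha (Suc m) = alpha m * (1 - tt ^ Suc m)"
  by (simp add: alpha_def)

lemma qpoch_0 [simp]: "qpoch x 0 = 1"
  by (simp add: qpoch_def)

lemma qpoch_Suc: "qpoch x (Suc m) = qpoch x m * (1 - x * tt ^ m)"
  by (simp add: qpoch_def)

lemma qpoch_tt: "qpoch tt m = alpha m"
  by (induction m) (simp_all add: qpoch_Suc alpha_Suc qpoch_def)

lemma qpoch_tt_power_Suc: "qpoch (tt ^ Suc k) n = alpha (k + n) / alpha k"
  by (induction n) (simp_all add: qpoch_Suc alpha_Suc alpha_nonzero power_add)

lemma qpoch_inverse_tt_power: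
  assumes "m \<le> N"
  shows "qpoch (inverse (tt ^ N)) m =
    (-1) ^ m * tt ^ (m choose 2) * alpha N / (tt ^ (m * N) * alpha (N - m))"
  using assms
proof (induction m)
  case 0
  then show ?case by (simp add: alpha_nonzero numeral_2_eq_2)
next
  case (Suc m)
  obtain d where N: "N = m + Suc d"
    using le_Suc_ex[OF Suc.prems] by auto
  have last_factor: "1 - inverse (tt ^ N) * tt ^ m = - (1 - tt ^ Suc d) / tt ^ Suc d"
    using tt_nonzero by (simp add: N power_add field_simps)
  have IH: "qpoch (inverse (tt ^ N)) m =
      (-1) ^ m * tt ^ (m choose 2) * alpha N / (tt ^ (m * N) * (alpha d * (1 - tt ^ Suc d)))"
    using Suc by (simp add: N alpha_Suc del: power_Suc)
  have exps: "tt ^ (Suc m * N) = tt ^ (m * N) * tt ^ m * tt ^ Suc d"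
      "tt ^ (Suc m choose 2) = tt ^ (m choose 2) * tt ^ m"
    by (simp_all only: N flip: power_add) (simp_all add: algebra_simps numeral_2_eq_2)
  have nz: "1 - tt ^ Suc d \<noteq> 0" "tt ^ Suc d \<noteq> 0" "tt ^ (m * N) \<noteq> 0" "tt ^ m \<noteq> 0"
    using tt_power_eq_1_iff[of "Suc d"] tt_nonzero by auto
  have "qpoch (inverse (tt ^ N)) (Suc m) =
      - ((-1) ^ m * tt ^ (m choose 2) * alpha N / (tt ^ (m * N) * alpha d * tt ^ Suc d))"
    unfolding qpoch_Suc last_factor IH using nz alpha_nonzero[of d] by (simp add: field_simps)
  also have "\<dots> = (-1) ^ Suc m * tt ^ (Suc m choose 2) * alpha N /
      (tt ^ (Suc m * N) * alpha (N - Suc m))"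
    unfolding exps using nz alpha_nonzero[of d] by (simp add: N field_simps)
  finally show ?case .
qed

definition qbinom :: "nat \<Rightarrow> nat \<Rightarrow> rat poly fract" where
  "qbinom n k = (if k \<le> n then alpha n / (alpha k * alpha (n - k)) else 0)"

lemma qbinom_0 [simp]: "qbinom n 0 = 1"
  by (simp add: qbinom_def alpha_nonzero)

lemma qbinom_Suc_Suc: "qbinom (Suc n) (Suc l) = qbinom n (Suc l) + tt ^ (n - l) * qbinom n l"
proof -
  consider "n < l" | "l = n" | d where "n = Suc (l + d)"
    using less_imp_Suc_add by (cases "l < n") fastforce+
  then show ?thesis
  proof cases
    case 3
    define X Y where "X = 1 - tt ^ Suc l" and "Y = 1 - tt ^ Suc d"
    have "X \<noteq> 0" "Y \<noteq> 0"
      using tt_power_eq_1_iff[of "Suc l"] tt_power_eq_1_iff[of "Suc d"] by (auto simp: X_def Y_def)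
    moreover have "alpha (Suc n) = alpha n * (Y + tt ^ Suc d * X)"
    proof -
      have "Suc n = Suc d + Suc l"
        using 3 by simp
      then have power_n: "tt ^ Suc n = tt ^ Suc d * tt ^ Suc l"
        by (simp only: power_add)
      show ?thesis
        unfolding alpha_Suc power_n X_def Y_def by (simp add: algebra_simps)
    qed
    moreover have "alpha (Suc l) = alpha l * X" "alpha (Suc d) = alpha d * Y"
      by (simp_all add: alpha_Suc X_def Y_def)
    moreover have "n - l = Suc d" "n - Suc l = d" "Suc l \<le> n"
      using 3 by simp_all
    ultimately show ?thesis
      using alpha_nonzero[of l] alpha_nonzero[of d] by (simp add: qbinom_def field_simps)
  qed (simp_all add: qbinom_def alpha_nonzero)
qed

lemma qpoch_eq_sum: "qpoch x n = (\<Sum>l\<le>n. (-1) ^ l * tt ^ (l choose 2) * qbinom n l * x ^ l)"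
proof (induction n)
  case 0
  then show ?case by (simp add: numeral_2_eq_2)
next
  case (Suc n)
  define c where "c k l = (-1) ^ l * tt ^ (l choose 2) * qbinom k l" for k l
  have c_Suc_Suc: "c (Suc n) (Suc l) = c n (Suc l) - tt ^ n * c n l" for l
  proof (cases "l \<le> n")
    case True
    then have "tt ^ (Suc l choose 2) * tt ^ (n - l) = tt ^ (l choose 2) * tt ^ n"
      by (simp add: numeral_2_eq_2 flip: power_add)
    then show ?thesis
      by (simp add: c_def qbinom_Suc_Suc algebra_simps)
  qed (simp add: c_def qbinom_Suc_Suc qbinom_def)
  have "(\<Sum>l\<le>Suc n. c (Suc n) l * x ^ l) = 1 + (\<Sum>l\<le>n. c (Suc n) (Suc l) * x ^ Suc l)"
    unfolding sum.atMost_Suc_shift by (simp add: c_def numeral_2_eq_2)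
  also have "\<dots> = 1 + (\<Sum>l\<le>n. c n (Suc l) * x ^ Suc l) - x * tt ^ n * (\<Sum>l\<le>n. c n l * x ^ l)"
    by (simp add: c_Suc_Suc sum_subtractf sum_distrib_left algebra_simps)
  also have "1 + (\<Sum>l\<le>n. c n (Suc l) * x ^ Suc l) = (\<Sum>l\<le>Suc n. c n l * x ^ l)"
    unfolding sum.atMost_Suc_shift by (simp add: c_def numeral_2_eq_2)
  also have "\<dots> = (\<Sum>l\<le>n. c n l * x ^ l)"
    by (simp add: c_def qbinom_def)
  finally show ?case
    by (simp add: Suc qpoch_Suc c_def algebra_simps)
qed

definition u_numer :: "nat \<Rightarrow> nat \<Rightarrow> nat \<Rightarrow> nat \<Rightarrow> rat poly fract" where
  "u_numer j i j' i' = (\<Sum>m = 0..min i i'. (-1) ^ m * tt ^ ((Suc m choose 2) + m * j') *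
      alpha (i + j - m) / (alpha (i - m) * alpha (i' - m) * alpha m))"

lemma u_eq_u_numer:
  assumes "i'' + j = j' + i'"
  shows "u j i j' i' j'' i'' = u_numer j i j' i' / (alpha i'' * alpha j * alpha j'')"
  unfolding u_def u_numer_def sum_distrib_left sum_divide_distrib
proof (rule sum.cong[OF refl])
  fix m assume "m \<in> {0..min i i'}"
  then have m: "m \<le> i" "m \<le> i'" "m \<le> i + j" by auto
  have powers: "tt ^ (m choose 2) * tt ^ (m * (i + j)) * tt ^ (m * (i'' + 1))
      = tt ^ ((Suc m choose 2) + m * j') * tt ^ (m * i) * tt ^ (m * i')"
  proof -
    have "(m choose 2) + m * (i + j) + m * (i'' + 1) = (Suc m choose 2) + m * j' + m * i + m * i'"
      using arg_cong[OF assms, of "(*) m"] by (simp add: numeral_2_eq_2 algebra_simps)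
    then show ?thesis by (simp only: power_add[symmetric])
  qed
  have sign: "(-1) ^ m * (-1) ^ m = (1 :: rat poly fract)"
    by (simp flip: power_add)
  show "alpha (i + j) / (alpha i * alpha i' * alpha i'' * alpha j * alpha j'') *
     (qpoch (inverse (tt ^ i)) m * qpoch (inverse (tt ^ i')) m /
        (qpoch tt m * qpoch (inverse (tt ^ (i + j))) m) * tt ^ (m * (i'' + 1)))
   = (-1) ^ m * tt ^ ((Suc m choose 2) + m * j') *
      alpha (i + j - m) / (alpha (i - m) * alpha (i' - m) * alpha m) / (alpha i'' * alpha j * alpha j'')"
    unfolding qpoch_inverse_tt_power[OF m(1)] qpoch_inverse_tt_power[OF m(2)]
      qpoch_inverse_tt_power[OF m(3)] qpoch_tt
    using alpha_nonzero tt_nonzero sign powers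
    by (simp add: field_simps)
qed

lemma u_numer_swap:
  assumes "i + j = i' + j''"
  shows "u_numer j i j' i' = u_numer j'' i' j' i"
  unfolding u_numer_def using assms by (simp add: min.commute algebra_simps)

definition sym_double_sum :: "nat \<Rightarrow> nat \<Rightarrow> nat \<Rightarrow> nat \<Rightarrow> rat poly fract" where
  "sym_double_sum b a y x = (\<Sum>m\<le>b. \<Sum>l\<le>a. (-1) ^ (m + l) * qbinom b m * qbinom a l *
      tt ^ ((Suc m choose 2) + m * y + (Suc l choose 2) + l * x) / tt ^ (m * l))"

lemma sym_double_sum_swap: "sym_double_sum b a y x = sym_double_sum a b x y"
  unfolding sym_double_sum_def by (subst sum.swap) (simp add: algebra_simps)

lemma qpoch_tt_power_Suc_diff:
  assumes "m \<le> i + j"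
  shows "qpoch (tt ^ Suc i / tt ^ m) j = (if m \<le> i then alpha (i + j - m) / alpha (i - m) else 0)"
proof (cases "m \<le> i")
  case True
  then have "tt ^ Suc i / tt ^ m = tt ^ Suc (i - m)"
    using tt_nonzero by (simp add: power_diff Suc_diff_le)
  with True show ?thesis
    using qpoch_tt_power_Suc[of "i - m" j] by simp
next
  case False
  then have "tt ^ Suc i / tt ^ m * tt ^ (m - Suc i) = 1" "m - Suc i < j"
    using assms tt_nonzero by (simp_all add: power_diff)
  with False show ?thesis
    unfolding qpoch_def by (force simp: prod_zero_iff)
qed

lemma alpha_mult_u_numer:
  assumes "i' \<le> i + j"
  shows "alpha i' * u_numer j i j' i' = sym_double_sum i' j j' i"
proof -
  define g where "g m = (-1) ^ m * tt ^ ((Suc m choose 2) + m * j') * qbinom i' m *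
     qpoch (tt ^ Suc i / tt ^ m) j" for m
  have g: "g m = (if m \<le> i then alpha i' * ((-1) ^ m * tt ^ ((Suc m choose 2) + m * j') *
      alpha (i + j - m) / (alpha (i - m) * alpha (i' - m) * alpha m)) else 0)"
    if "m \<le> i'" for m
    using that alpha_nonzero unfolding g_def qpoch_tt_power_Suc_diff[OF le_trans[OF that assms]]
    by (simp add: qbinom_def field_simps)
  have "alpha i' * u_numer j i j' i' = (\<Sum>m = 0..min i i'. g m)"
    unfolding u_numer_def sum_distrib_left
    by (rule sum.cong) (auto simp: g)
  also have "\<dots> = (\<Sum>m\<le>i'. g m)"
    by (rule sum.mono_neutral_left) (auto simp: g)
  also have "\<dots> = sym_double_sum i' j j' i"
    unfolding sym_double_sum_def g_def qpoch_eq_sum sum_distrib_left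
  proof (intro sum.cong refl)
    fix m l
    have "tt ^ (l choose 2) * (tt ^ Suc i / tt ^ m) ^ l = tt ^ ((Suc l choose 2) + l * i) / tt ^ (m * l)"
      by (simp add: power_divide numeral_2_eq_2 algebra_simps flip: power_add power_mult)
    then show "(-1) ^ m * tt ^ ((Suc m choose 2) + m * j') * qbinom i' m *
        ((-1) ^ l * tt ^ (l choose 2) * qbinom j l * (tt ^ Suc i / tt ^ m) ^ l) =
      (-1) ^ (m + l) * qbinom i' m * qbinom j l *
        tt ^ ((Suc m choose 2) + m * j' + (Suc l choose 2) + l * i) / tt ^ (m * l)"
      by (simp add: power_add algebra_simps)
  qed
  finally show ?thesis .
qed

lemma u_eq_sym_double_sum:
  assumes "i'' + j = j' + i'" and "i' \<le> i + j"
  shows "u j i j' i' j'' i'' = sym_double_sum i' j j' i / (alpha i' * alpha i'' * alpha j * alpha j'')"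
  using alpha_mult_u_numer[OF assms(2), symmetric] alpha_nonzero
  by (simp add: u_eq_u_numer[OF assms(1)] field_simps)

lemma u_reflect:
  assumes "i'' + j = j' + i'" and "i + j = i' + j''"
  shows "u j i j' i' j'' i'' = u j'' i' j' i j i''"
proof -
  have "i'' + j'' = j' + i"
    using assms by linarith
  then show ?thesis
    using u_numer_swap[OF assms(2)] by (simp add: u_eq_u_numer assms(1) ac_simps)
qed

lemma u_rotate:
  assumes "i'' + j = j' + i'" and "i + j = i' + j''"
  shows "u j i j' i' j'' i'' = u i j' i' j'' i'' j"
proof -
  have "u j i j' i' j'' i'' = u j'' i' j' i j i''"
    using assms by (rule u_reflect)
  also have "\<dots> = sym_double_sum i j'' j' i' / (alpha i * alpha i'' * alpha j'' * alpha j)"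
    using assms by (intro u_eq_sym_double_sum) linarith+
  also have "\<dots> = sym_double_sum j'' i i' j' / (alpha j'' * alpha j * alpha i * alpha i'')"
    by (simp add: sym_double_sum_swap ac_simps)
  also have "\<dots> = u i j' i' j'' i'' j"
    using assms by (intro u_eq_sym_double_sum[symmetric]) linarith+
  finally show ?thesis .
qed

theorem lemma3p2:
  fixes j i j' i' j'' i'' :: nat
  assumes "int i' - int j = int i'' - int j'"
      and "int i'' - int j' = int i - int j''"
  shows "u j i j' i' j'' i'' = u j' i' j'' i'' j i
       \<and> u j i j' i' j'' i'' = u i j' i' j'' i'' j
       \<and> u j i j' i' j'' i'' = u j'' i' j' i j i''"
proof -
  have bal: "i'' + j = j' + i'" "i + j = i' + j''" "j + i = i' + j''" "j' + i = j'' + i''"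
    using assms by linarith+
  have "u j i j' i' j'' i'' = u i j' i' j'' i'' j"
    using bal(1,2) by (rule u_rotate)
  moreover have "u i j' i' j'' i'' j = u j' i' j'' i'' j i"
    using bal(3,4) by (rule u_rotate)
  moreover have "u j i j' i' j'' i'' = u j'' i' j' i j i''"
    using bal(1,2) by (rule u_reflect)
  ultimately show ?thesis by simp
qed

end
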